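(* Let $\mathbb{T}$ be a time scale unbounded from above, $t_0\in\mathbb{T}$, $b,c:\mathbb{T}\to[0,\infty)$ with $c-b\in\mathcal{R}^+$, $x_0>0$, $y_0>0$, $z_0\ge0$, $N=x_0+y_0+z_0$. Assume there is $M>0$ with $b(t)\le M(c-b)(t)$ for all $t\in\mathbb{T}$, and $\int_{t_0}^{\infty}(c-b)(\tau)\,\Delta\tau=\infty$. Then every solution $(x,y,z)$ of $$x^{\Delta}=-\frac{b(t)\,x\,y^{\sigma}}{x+y},\qquad y^{\Delta}=\frac{b(t)\,x\,y^{\sigma}}{x+y}-c(t)\,y^{\sigma},\qquad z^{\Delta}=c(t)\,y^{\sigma},$$ with $x,y:\mathbb{T}\to(0,\infty)$, $z:\mathbb{T}\to[0,\infty)$, $x(t_0)=x_0$, $y(t_0)=y_0$, $z(t_0)=z_0$, converges as $t\to\infty$ to $(\alpha,0,N-\alpha)$ for some $\alpha\in(0,N)$.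
   Context: A time scale $\mathbb{T}$ is a nonempty closed subset of $\mathbb{R}$. $\sigma(t)=\inf\{s\in\mathbb{T}:s>t\}$, $\mu(t)=\sigma(t)-t$, $f^{\sigma}=f\circ\sigma$. $f^{\Delta}$ is the delta (Hilger) derivative: for every $\varepsilon>0$ there is $\delta>0$ with $|f(\sigma(t))-f(s)-f^{\Delta}(t)(\sigma(t)-s)|\le\varepsilon|\sigma(t)-s|$ for $s\in(t-\delta,t+\delta)\cap\mathbb{T}$. $\int\cdot\,\Delta\tau$ is the delta integral on $\mathbb{T}$. $p\in\mathcal{R}^+$ means $p$ is rd-continuous (continuous at right-dense points, finite left limits at left-dense points) and $1+\mu(t)p(t)>0$ for all $t\in\mathbb{T}$. *)

theory Defs
  imports "HOL-Analysis.Analysis"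
begin

text \<open>Time scales: a time scale is a nonempty closed subset T of the reals.
  Functions on T are modelled as total functions real => real whose values
  outside T are irrelevant.\<close>

definition time_scale :: "real set \<Rightarrow> bool" where
  "time_scale T \<longleftrightarrow> T \<noteq> {} \<and> closed T"

definition ts_sigma :: "real set \<Rightarrow> real \<Rightarrow> real" where
  "ts_sigma T t = (if {s\<in>T. s > t} = {} then t else Inf {s\<in>T. s > t})"

definition ts_rho :: "real set \<Rightarrow> real \<Rightarrow> real" where
  "ts_rho T t = (if {s\<in>T. s < t} = {} then t else Sup {s\<in>T. s < t})"

definition ts_mu :: "real set \<Rightarrow> real \<Rightarrow> real" where
  "ts_mu T t = ts_sigma T t - t"

definition ts_kappa :: "real set \<Rightarrow> real set" where
  "ts_kappa T = {t\<in>T. \<not> ((\<forall>s\<in>T. s \<le> t) \<and> ts_rho T t < t)}"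

definition has_delta_derivative :: "real set \<Rightarrow> (real \<Rightarrow> real) \<Rightarrow> real \<Rightarrow> real \<Rightarrow> bool" where
  "has_delta_derivative T f D t \<longleftrightarrow>
     (\<forall>\<epsilon>>0. \<exists>\<delta>>0. \<forall>s\<in>T. \<bar>s - t\<bar> < \<delta> \<longrightarrow>
        \<bar>f (ts_sigma T t) - f s - D * (ts_sigma T t - s)\<bar> \<le> \<epsilon> * \<bar>ts_sigma T t - s\<bar>)"

definition rd_continuous :: "real set \<Rightarrow> (real \<Rightarrow> real) \<Rightarrow> bool" where
  "rd_continuous T f \<longleftrightarrow>
     (\<forall>t\<in>T. (ts_sigma T t = t \<longrightarrow> continuous (at t within T) f) \<and>
            (ts_rho T t = t \<and> (\<exists>s\<in>T. s < t) \<longrightarrow>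
               (\<exists>L. (f \<longlongrightarrow> L) (at t within (T \<inter> {..<t})))))"

definition pos_regressive :: "real set \<Rightarrow> (real \<Rightarrow> real) \<Rightarrow> bool" where
  "pos_regressive T p \<longleftrightarrow> rd_continuous T p \<and> (\<forall>t\<in>T. 1 + ts_mu T t * p t > 0)"

definition delta_integral :: "real set \<Rightarrow> (real \<Rightarrow> real) \<Rightarrow> real \<Rightarrow> real \<Rightarrow> real" where
  "delta_integral T f a b =
     (let F = (SOME F. \<forall>t\<in>ts_kappa T. has_delta_derivative T F (f t) t) in F b - F a)"

definition delta_integral_diverges :: "real set \<Rightarrow> (real \<Rightarrow> real) \<Rightarrow> real \<Rightarrow> bool" where
  "delta_integral_diverges T f a \<longleftrightarrow>
     filterlim (\<lambda>t. delta_integral T f a t) at_top (inf at_top (principal T))"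

end

theory Submission
  imports Defs
begin

text \<open>Both \<open>x\<close> and \<open>y\<close> are nonincreasing and \<open>x + y + z\<close> is constant, so all three
  components converge. If \<open>y\<close> decreased to some \<open>\<beta> > 0\<close>, then \<open>y + \<beta> P\<close>, with \<open>P\<close> an
  antiderivative of \<open>c - b\<close>, would be nonincreasing and \<open>P\<close> bounded, contradicting the
  divergence of \<open>\<integral> (c - b)\<close>; hence \<open>y \<longrightarrow> 0\<close>. With \<open>k = M / (1 + M) < 1\<close> we have
  \<open>b \<le> k c\<close>, and then \<open>ln x - k ln (x + y)\<close> is nondecreasing (at right-scattered points by
  concavity of \<open>ln\<close>), which keeps \<open>x\<close> bounded away from \<open>0\<close>.
  The divergence hypothesis only speaks about an antiderivative of \<open>c - b\<close> if one exists;
  it is obtained by integrating \<open>c - b\<close> composed with the map sending \<open>r\<close> to the last point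
  of the time scale not after \<open>r\<close>, which is continuous off the countable set of scattered
  points.\<close>

section \<open>Jump operators\<close>

lemma closed_subset_contains_Inf:
  fixes S :: "real set"
  assumes "closed T" "S \<subseteq> T" "S \<noteq> {}" "bdd_below S"
  shows "Inf S \<in> T"
  using closure_contains_Inf[OF assms(3,4)] closure_minimal[OF assms(2,1)] by blast

lemma closed_subset_contains_Sup:
  fixes S :: "real set"
  assumes "closed T" "S \<subseteq> T" "S \<noteq> {}" "bdd_above S"
  shows "Sup S \<in> T"
  using closure_contains_Sup[OF assms(3,4)] closure_minimal[OF assms(2,1)] by blast

lemma ts_sigma_ge: "t \<le> ts_sigma T t"
  unfolding ts_sigma_def by (auto intro: cInf_greatest)

lemma ts_sigma_le:
  assumes "s \<in> T" "t < s"
  shows "ts_sigma T t \<le> s"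
proof -
  have "{u\<in>T. u > t} \<noteq> {}" using assms by auto
  then show ?thesis
    using assms unfolding ts_sigma_def by (auto intro!: cInf_lower bdd_belowI[of _ t])
qed

lemma ts_sigma_in:
  assumes "closed T" "t \<in> T"
  shows "ts_sigma T t \<in> T"
proof (cases "{s\<in>T. s > t} = {}")
  case False
  then have "Inf {s\<in>T. s > t} \<in> T"
    using assms(1) by (intro closed_subset_contains_Inf) (auto intro: bdd_belowI[of _ t])
  then show ?thesis
    unfolding ts_sigma_def if_not_P[OF False] .
qed (use assms in \<open>simp add: ts_sigma_def\<close>)

lemma ts_sigma_eqI:
  assumes "t \<in> T" "s \<in> T" "t < s" and gap: "\<And>u. u \<in> T \<Longrightarrow> t < u \<Longrightarrow> s \<le> u"
  shows "ts_sigma T t = s"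
proof -
  have ne: "{u\<in>T. u > t} \<noteq> {}"
    using assms by auto
  have "Inf {u\<in>T. u > t} = s"
    using assms by (intro cInf_eq_minimum) auto
  then show ?thesis
    unfolding ts_sigma_def if_not_P[OF ne] .
qed

lemma ts_sigma_Inf_eq:
  fixes S :: "real set"
  assumes "S \<subseteq> T" "S \<noteq> {}" "bdd_below S" "Inf S \<notin> S"
  shows "ts_sigma T (Inf S) = Inf S"
proof (rule antisym)
  have "Inf S < u" if "u \<in> S" for u
    using cInf_lower[OF that assms(3)] that assms(4) by (cases "Inf S = u") auto
  then show "ts_sigma T (Inf S) \<le> Inf S"
    using assms(1,2) by (intro cInf_greatest ts_sigma_le) auto
qed (rule ts_sigma_ge)

lemma ts_rho_le: "ts_rho T t \<le> t"
  unfolding ts_rho_def by (auto intro: cSup_least)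

lemma ts_rho_ge:
  assumes "s \<in> T" "s < t"
  shows "s \<le> ts_rho T t"
proof -
  have "{u\<in>T. u < t} \<noteq> {}" using assms by auto
  then show ?thesis
    using assms unfolding ts_rho_def by (auto intro!: cSup_upper bdd_aboveI[of _ t])
qed

lemma ts_rho_left_dense:
  assumes "ts_rho T t = t" "s \<in> T" "s < t" "d > 0"
  obtains u where "u \<in> T" "t - d < u" "u < t"
proof -
  have ne: "{u\<in>T. u < t} \<noteq> {}"
    using assms by auto
  then have "t - d < Sup {u\<in>T. u < t}"
    using assms unfolding ts_rho_def if_not_P[OF ne] by simp
  then show ?thesis
    using that less_cSupD[OF ne] by blast
qed

lemma ts_left_dense_or_sigma:
  assumes "closed T" "s \<in> T" "m \<in> T" "s < m"
  obtains p where "p \<in> T" "s \<le> p" "p < m" "ts_sigma T p = m"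
    | "\<forall>d>0. \<exists>u\<in>T. m - d < u \<and> u < m"
proof -
  define L where "L = {u\<in>T. s \<le> u \<and> u < m}"
  define p where "p = Sup L"
  have L: "L \<noteq> {}" "bdd_above L"
    using assms by (auto simp: L_def intro: bdd_aboveI[of _ m])
  have le_p: "u \<le> p" if "u \<in> L" for u
    unfolding p_def using that L(2) by (rule cSup_upper)
  have "p \<in> T" "s \<le> p" "p \<le> m"
    using closed_subset_contains_Sup[OF assms(1) _ L] le_p[of s] assms L(1)
    by (auto simp: p_def L_def intro: cSup_least)
  show thesis
  proof (cases "p < m")
    case True
    have "ts_sigma T p = m"
      using \<open>p \<in> T\<close> \<open>m \<in> T\<close> True
    proof (rule ts_sigma_eqI)
      show "m \<le> u" if "u \<in> T" "p < u" for u
        using le_p[of u] that \<open>s \<le> p\<close> by (force simp: L_def)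
    qed
    with \<open>p \<in> T\<close> \<open>s \<le> p\<close> True that(1) show thesis
      by blast
  next
    case False
    have "\<exists>u\<in>T. m - d < u \<and> u < m" if "d > 0" for d
    proof -
      obtain u where "u \<in> L" "m - d < u"
        using less_cSupD[OF L(1), of "m - d"] \<open>d > 0\<close> False \<open>p \<le> m\<close> by (auto simp: p_def)
      then show ?thesis
        by (auto simp: L_def)
    qed
    with that(2) show thesis
      by blast
  qed
qed

lemma countable_by_disjoint_gaps:
  fixes S :: "real set" and l u :: "real \<Rightarrow> real"
  assumes gap: "\<And>t. t \<in> S \<Longrightarrow> l t < u t"
    and ordered: "\<And>s t. s \<in> S \<Longrightarrow> t \<in> S \<Longrightarrow> s < t \<Longrightarrow> u s \<le> l t"
  shows "countable S"
proof (rule countable_image_inj_on)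
  let ?I = "\<lambda>t. {l t<..<u t}"
  have disj: "disjnt (?I s) (?I t)" if "s \<in> S" "t \<in> S" "s \<noteq> t" for s t
    using that ordered[of s t] ordered[of t s] by (cases "s < t") (auto simp: disjnt_def)
  show "countable (?I ` S)"
    by (rule countable_disjoint_open_subsets) (auto simp: pairwise_def intro: disj)
  show "inj_on ?I S"
  proof (rule inj_onI, rule ccontr)
    fix s t assume "s \<in> S" "t \<in> S" "?I s = ?I t" "s \<noteq> t"
    then show False
      using disj[of s t] gap[of s] by (auto simp: disjnt_def)
  qed
qed

definition ts_scattered :: "real set \<Rightarrow> real set" where
  "ts_scattered T = {t\<in>T. t < ts_sigma T t} \<union> {t\<in>T. ts_rho T t < t}"

lemma countable_ts_scattered: "countable (ts_scattered T)"
proof -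
  have "countable {t\<in>T. t < ts_sigma T t}"
    by (rule countable_by_disjoint_gaps[where l = id and u = "ts_sigma T"])
      (auto intro: ts_sigma_le)
  moreover have "countable {t\<in>T. ts_rho T t < t}"
    by (rule countable_by_disjoint_gaps[where l = "ts_rho T" and u = id])
      (auto intro: ts_rho_ge)
  ultimately show ?thesis
    by (simp add: ts_scattered_def)
qed

lemma negligible_ts_scattered: "negligible (ts_scattered T)"
proof -
  have "ts_scattered T = \<Union> ((\<lambda>t. {t}) ` ts_scattered T)"
    by blast
  also have "negligible \<dots>"
    using countable_ts_scattered by (intro negligible_countable_Union) auto
  finally show ?thesis .
qed

section \<open>Induction on a time scale\<close>

text \<open>The induction principle of Bohner and Peterson (Theorem 1.7), on \<open>[s, r]\<close>.\<close>
lemma ts_induct [consumes 4, case_names base right_scattered right_dense left_dense]: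
  assumes T: "closed T" and s: "s \<in> T" and r: "r \<in> T" "s \<le> r"
    and base: "P s"
    and right_scattered: "\<And>t. t \<in> T \<Longrightarrow> s \<le> t \<Longrightarrow> t < r \<Longrightarrow> t < ts_sigma T t \<Longrightarrow>
      P t \<Longrightarrow> P (ts_sigma T t)"
    and right_dense: "\<And>t. t \<in> T \<Longrightarrow> s \<le> t \<Longrightarrow> t < r \<Longrightarrow> ts_sigma T t = t \<Longrightarrow>
      P t \<Longrightarrow> \<exists>d>0. \<forall>u\<in>T. t < u \<and> u < t + d \<longrightarrow> P u"
    and left_dense: "\<And>t. t \<in> T \<Longrightarrow> s < t \<Longrightarrow> t \<le> r \<Longrightarrow>
      (\<forall>d>0. \<exists>u\<in>T. t - d < u \<and> u < t) \<Longrightarrow> (\<forall>u\<in>T. s \<le> u \<and> u < t \<longrightarrow> P u) \<Longrightarrow> P t"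
  shows "P r"
proof (rule ccontr)
  assume "\<not> P r"
  define B where "B = {u\<in>T. s \<le> u \<and> u \<le> r \<and> \<not> P u}"
  define m where "m = Inf B"
  have B: "B \<subseteq> T" "B \<noteq> {}" "bdd_below B"
    using r \<open>\<not> P r\<close> by (auto simp: B_def intro: bdd_belowI[of _ s])
  have m_le: "m \<le> u" if "u \<in> B" for u
    unfolding m_def using that B(3) by (rule cInf_lower)
  have "m \<in> T" "s \<le> m" "m \<le> r"
    using closed_subset_contains_Inf[OF T B] m_le[of r] r \<open>\<not> P r\<close> B(2)
    by (auto simp: m_def B_def intro: cInf_greatest)
  have below: "P u" if "u \<in> T" "s \<le> u" "u < m" for u
    using m_le[of u] that \<open>m \<le> r\<close> by (auto simp: B_def)
  show False
  proof (cases "P m")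
    case True
    then have "m \<notin> B" "m < r"
      using \<open>m \<le> r\<close> \<open>\<not> P r\<close> by (auto simp: B_def le_less)
    then have "ts_sigma T m = m"
      unfolding m_def using B by (intro ts_sigma_Inf_eq) (auto simp: m_def)
    then obtain d where "d > 0" "\<forall>u\<in>T. m < u \<and> u < m + d \<longrightarrow> P u"
      using right_dense \<open>m \<in> T\<close> \<open>s \<le> m\<close> \<open>m < r\<close> True by blast
    moreover obtain u where "u \<in> B" "u < m + d"
      using cInf_lessD[OF B(2), of "m + d"] \<open>d > 0\<close> by (auto simp: m_def)
    moreover have "m < u"
      using m_le[OF \<open>u \<in> B\<close>] \<open>u \<in> B\<close> \<open>m \<notin> B\<close> by (cases "m = u") auto
    ultimately show False
      by (auto simp: B_def)
  next
    case False
    then have "s < m"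
      using \<open>s \<le> m\<close> base by (cases "s = m") auto
    with T s \<open>m \<in> T\<close> have "P m"
    proof (cases rule: ts_left_dense_or_sigma)
      case (1 p)
      then show ?thesis
        using right_scattered[of p] below[of p] \<open>m \<le> r\<close> by auto
    next
      case 2
      then show ?thesis
        using left_dense \<open>m \<in> T\<close> \<open>s < m\<close> \<open>m \<le> r\<close> below by blast
    qed
    with False show False ..
  qed
qed

lemma has_real_derivative_nonneg_imp_right_ge:
  fixes \<phi> :: "real \<Rightarrow> real"
  assumes "(\<phi> has_real_derivative D) (at t within T)" "D \<ge> 0" "e > 0"
  shows "\<exists>d>0. \<forall>u\<in>T. t < u \<and> u < t + d \<longrightarrow> \<phi> t - e * (u - t) \<le> \<phi> u"
proof -
  obtain d where "d > 0"
    and d: "\<forall>u\<in>T. \<bar>u - t\<bar> < d \<longrightarrow> \<bar>\<phi> u - \<phi> t - D * (u - t)\<bar> \<le> e * \<bar>u - t\<bar>"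
    using assms unfolding has_field_derivative_def has_derivative_within_alt by fastforce
  have ge: "\<phi> t - e * (u - t) \<le> \<phi> u" if "u \<in> T" "t < u" "u < t + d" for u
  proof -
    have "\<bar>\<phi> u - \<phi> t - D * (u - t)\<bar> \<le> e * (u - t)"
      using d that by auto
    moreover have "0 \<le> D * (u - t)"
      using \<open>D \<ge> 0\<close> that by simp
    ultimately show ?thesis
      by (simp add: abs_le_iff)
  qed
  with \<open>d > 0\<close> show ?thesis
    by blast
qed

lemma islimpt_left_dense:
  fixes s t :: real
  assumes "\<forall>d>0. \<exists>u\<in>T. t - d < u \<and> u < t" "s < t"
  shows "t islimpt T \<inter> {s..<t}"
proof (rule islimpt_approachable_real[THEN iffD2], intro allI impI)
  fix d :: real assume "d > 0"
  then obtain u where "u \<in> T" "t - min d (t - s) < u" "u < t"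
    using assms by (meson diff_gt_0_iff_gt min_less_iff_conj)
  then show "\<exists>u\<in>T \<inter> {s..<t}. u \<noteq> t \<and> \<bar>u - t\<bar> < d"
    by (intro bexI[of _ u]) auto
qed

lemma ts_mono_criterion:
  fixes \<phi> :: "real \<Rightarrow> real"
  assumes T: "closed T" and sr: "s \<in> T" "r \<in> T" "s \<le> r"
    and cont: "\<And>t. t \<in> T \<Longrightarrow> (\<phi> \<longlongrightarrow> \<phi> t) (at t within T)"
    and jump: "\<And>t. t \<in> T \<Longrightarrow> t < ts_sigma T t \<Longrightarrow> \<phi> t \<le> \<phi> (ts_sigma T t)"
    and deriv: "\<And>t. t \<in> T \<Longrightarrow> ts_sigma T t = t \<Longrightarrow>
      \<exists>D\<ge>0. (\<phi> has_real_derivative D) (at t within T)"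
  shows "\<phi> s \<le> \<phi> r"
proof (rule field_le_epsilon)
  fix \<epsilon> :: real assume "\<epsilon> > 0"
  define e where "e = \<epsilon> / (r - s + 1)"
  have e: "e > 0" "e * (r - s) \<le> \<epsilon>"
    using \<open>\<epsilon> > 0\<close> sr by (auto simp: e_def field_simps)
  \<comment> \<open>the slack \<open>e * (u - s)\<close> absorbs the error of the linear approximation at right-dense points\<close>
  have "\<phi> s \<le> \<phi> r + e * (r - s)"
    using T sr
  proof (induction rule: ts_induct)
    case base
    show ?case by simp
  next
    case (right_scattered t)
    have "e * (t - s) \<le> e * (ts_sigma T t - s)"
      using right_scattered.hyps e by (intro mult_left_mono) auto
    then show ?case
      using jump[of t] right_scattered by linarith
  next
    case (right_dense t)
    obtain D where "(\<phi> has_real_derivative D) (at t within T)" "D \<ge> 0"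
      using deriv right_dense.hyps by blast
    then obtain d where "d > 0" and d: "\<forall>u\<in>T. t < u \<and> u < t + d \<longrightarrow> \<phi> t - e * (u - t) \<le> \<phi> u"
      using e(1) has_real_derivative_nonneg_imp_right_ge by blast
    have "\<phi> s \<le> \<phi> u + e * (u - s)" if "u \<in> T" "t < u" "u < t + d" for u
    proof -
      have "\<phi> t - e * (u - t) \<le> \<phi> u"
        using d that by blast
      with right_dense.IH show ?thesis
        by (simp add: algebra_simps)
    qed
    with \<open>d > 0\<close> show ?case by blast
  next
    case (left_dense t)
    have "((\<lambda>u. \<phi> u + e * (u - s)) \<longlongrightarrow> \<phi> t + e * (t - s)) (at t within T \<inter> {s..<t})"
      by (intro tendsto_intros tendsto_within_subset[OF cont]) (use left_dense in auto)
    moreover have "\<forall>\<^sub>F u in at t within T \<inter> {s..<t}. \<phi> s \<le> \<phi> u + e * (u - s)"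
      using left_dense.IH by (auto simp: eventually_at_filter intro!: always_eventually)
    moreover have "t islimpt T \<inter> {s..<t}"
      using left_dense.hyps(4) \<open>s < t\<close> by (rule islimpt_left_dense)
    ultimately show ?case
      by (intro tendsto_lowerbound) (auto simp: trivial_limit_within)
  qed
  with e show "\<phi> s \<le> \<phi> r + \<epsilon>" by linarith
qed

section \<open>Delta derivatives\<close>

lemma has_delta_derivative_jump:
  assumes f: "has_delta_derivative T f D t" and "t \<in> T"
  shows "f (ts_sigma T t) = f t + D * (ts_sigma T t - t)"
proof -
  let ?\<mu> = "ts_sigma T t - t"
  have "\<bar>f (ts_sigma T t) - f t - D * ?\<mu>\<bar> \<le> 0 + \<epsilon>" if "\<epsilon> > 0" for \<epsilon>
  proof -
    have "?\<mu> \<ge> 0"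
      using ts_sigma_ge[of t T] by simp
    with that have "\<epsilon> / (?\<mu> + 1) > 0" "\<epsilon> / (?\<mu> + 1) * ?\<mu> \<le> \<epsilon>"
      by (auto simp: field_simps)
    moreover note f[unfolded has_delta_derivative_def, rule_format, of "\<epsilon> / (?\<mu> + 1)"]
    ultimately show ?thesis
      using \<open>t \<in> T\<close> \<open>?\<mu> \<ge> 0\<close> by fastforce
  qed
  then have "\<bar>f (ts_sigma T t) - f t - D * ?\<mu>\<bar> \<le> 0"
    by (rule field_le_epsilon)
  then show ?thesis by simp
qed

lemma has_delta_derivative_imp_tendsto:
  assumes f: "has_delta_derivative T f D t" and "t \<in> T"
  shows "(f \<longlongrightarrow> f t) (at t within T)"
proof -
  let ?\<sigma> = "ts_sigma T t"
  let ?err = "\<lambda>s. f ?\<sigma> - f s - D * (?\<sigma> - s)"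
  have "(?err \<longlongrightarrow> 0) (at t within T)"
  proof (rule tendstoI)
    fix \<epsilon> :: real assume "\<epsilon> > 0"
    define m where "m = ?\<sigma> - t + 1"
    define \<eta> where "\<eta> = \<epsilon> / 2 / m"
    have "?\<sigma> - t \<ge> 0"
      using ts_sigma_ge[of t T] by simp
    then have "m > 0"
      by (simp add: m_def)
    then have \<eta>: "\<eta> > 0" "\<eta> * (?\<sigma> - t + 1) < \<epsilon>"
      using \<open>\<epsilon> > 0\<close> by (simp_all add: \<eta>_def m_def[symmetric])
    obtain \<delta> where "\<delta> > 0" and \<delta>: "\<forall>s\<in>T. \<bar>s - t\<bar> < \<delta> \<longrightarrow> \<bar>?err s\<bar> \<le> \<eta> * \<bar>?\<sigma> - s\<bar>"
      using f \<eta>(1) unfolding has_delta_derivative_def by blast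
    have "\<bar>?err s\<bar> < \<epsilon>" if "s \<in> T" "\<bar>s - t\<bar> < min \<delta> 1" for s
    proof -
      have "\<bar>?err s\<bar> \<le> \<eta> * \<bar>?\<sigma> - s\<bar>"
        using \<delta> that by simp
      also have "\<dots> \<le> \<eta> * (?\<sigma> - t + 1)"
        using that \<open>?\<sigma> - t \<ge> 0\<close> \<eta>(1) by (intro mult_left_mono) auto
      finally show ?thesis
        using \<eta>(2) by linarith
    qed
    then show "\<forall>\<^sub>F s in at t within T. dist (?err s) 0 < \<epsilon>"
      unfolding eventually_at using \<open>\<delta> > 0\<close>
      by (intro exI[of _ "min \<delta> 1"]) (auto simp: dist_real_def)
  qed
  then have "((\<lambda>s. f ?\<sigma> - D * (?\<sigma> - s) - ?err s) \<longlongrightarrow> f ?\<sigma> - D * (?\<sigma> - t) - 0) (at t within T)"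
    by (intro tendsto_intros)
  then show ?thesis
    using has_delta_derivative_jump[OF assms] by simp
qed

lemma has_delta_derivative_imp_has_real_derivative:
  assumes f: "has_delta_derivative T f D t" and "ts_sigma T t = t"
  shows "(f has_real_derivative D) (at t within T)"
  unfolding has_field_derivative_def has_derivative_within_alt
proof (intro conjI allI impI bounded_linear_mult_right)
  fix \<epsilon> :: real assume "\<epsilon> > 0"
  with f obtain \<delta> where "\<delta> > 0" and \<delta>: "\<forall>s\<in>T. \<bar>s - t\<bar> < \<delta> \<longrightarrow>
      \<bar>f t - f s - D * (t - s)\<bar> \<le> \<epsilon> * \<bar>t - s\<bar>"
    using \<open>ts_sigma T t = t\<close> unfolding has_delta_derivative_def by auto
  have "\<bar>f s - f t - D * (s - t)\<bar> \<le> \<epsilon> * \<bar>s - t\<bar>" if "s \<in> T" "\<bar>s - t\<bar> < \<delta>" for s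
  proof -
    have "f s - f t - D * (s - t) = - (f t - f s - D * (t - s))"
      by (simp add: algebra_simps)
    then show ?thesis
      using \<delta> that by (simp only: abs_minus_cancel abs_minus_commute[of s t])
  qed
  with \<open>\<delta> > 0\<close> show "\<exists>\<delta>>0. \<forall>s\<in>T. norm (s - t) < \<delta> \<longrightarrow>
      norm (f s - f t - D * (s - t)) \<le> \<epsilon> * norm (s - t)"
    by auto
qed

lemma has_delta_derivative_add:
  assumes f: "has_delta_derivative T f D t" and g: "has_delta_derivative T g E t"
  shows "has_delta_derivative T (\<lambda>u. f u + g u) (D + E) t"
  unfolding has_delta_derivative_def
proof (intro allI impI)
  fix \<epsilon> :: real assume "\<epsilon> > 0"
  then have "\<epsilon> / 2 > 0" by simp
  then obtain \<delta>1 \<delta>2 where "\<delta>1 > 0" "\<delta>2 > 0"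
    and \<delta>1: "\<forall>s\<in>T. \<bar>s - t\<bar> < \<delta>1 \<longrightarrow>
      \<bar>f (ts_sigma T t) - f s - D * (ts_sigma T t - s)\<bar> \<le> \<epsilon> / 2 * \<bar>ts_sigma T t - s\<bar>"
    and \<delta>2: "\<forall>s\<in>T. \<bar>s - t\<bar> < \<delta>2 \<longrightarrow>
      \<bar>g (ts_sigma T t) - g s - E * (ts_sigma T t - s)\<bar> \<le> \<epsilon> / 2 * \<bar>ts_sigma T t - s\<bar>"
    using f g unfolding has_delta_derivative_def by blast
  have "\<bar>f (ts_sigma T t) + g (ts_sigma T t) - (f s + g s) - (D + E) * (ts_sigma T t - s)\<bar>
      \<le> \<epsilon> * \<bar>ts_sigma T t - s\<bar>" if "s \<in> T" "\<bar>s - t\<bar> < min \<delta>1 \<delta>2" for s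
  proof -
    have "\<bar>f (ts_sigma T t) + g (ts_sigma T t) - (f s + g s) - (D + E) * (ts_sigma T t - s)\<bar>
        \<le> \<bar>f (ts_sigma T t) - f s - D * (ts_sigma T t - s)\<bar>
          + \<bar>g (ts_sigma T t) - g s - E * (ts_sigma T t - s)\<bar>"
      by (simp add: algebra_simps)
    also have "\<dots> \<le> \<epsilon> / 2 * \<bar>ts_sigma T t - s\<bar> + \<epsilon> / 2 * \<bar>ts_sigma T t - s\<bar>"
      using \<delta>1 \<delta>2 that by (intro add_mono) auto
    finally show ?thesis by simp
  qed
  with \<open>\<delta>1 > 0\<close> \<open>\<delta>2 > 0\<close> show "\<exists>\<delta>>0. \<forall>s\<in>T. \<bar>s - t\<bar> < \<delta> \<longrightarrow>
      \<bar>f (ts_sigma T t) + g (ts_sigma T t) - (f s + g s) - (D + E) * (ts_sigma T t - s)\<bar>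
        \<le> \<epsilon> * \<bar>ts_sigma T t - s\<bar>"
    by (intro exI[of _ "min \<delta>1 \<delta>2"]) auto
qed

lemma has_delta_derivative_cmult:
  assumes f: "has_delta_derivative T f D t"
  shows "has_delta_derivative T (\<lambda>u. k * f u) (k * D) t"
  unfolding has_delta_derivative_def
proof (intro allI impI)
  fix \<epsilon> :: real assume "\<epsilon> > 0"
  then have "\<epsilon> / (\<bar>k\<bar> + 1) > 0"
    by (simp add: add_pos_nonneg)
  then obtain \<delta> where "\<delta> > 0" and \<delta>: "\<forall>s\<in>T. \<bar>s - t\<bar> < \<delta> \<longrightarrow>
      \<bar>f (ts_sigma T t) - f s - D * (ts_sigma T t - s)\<bar> \<le> \<epsilon> / (\<bar>k\<bar> + 1) * \<bar>ts_sigma T t - s\<bar>"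
    using f unfolding has_delta_derivative_def by blast
  have "\<bar>k * f (ts_sigma T t) - k * f s - k * D * (ts_sigma T t - s)\<bar> \<le> \<epsilon> * \<bar>ts_sigma T t - s\<bar>"
    if "s \<in> T" "\<bar>s - t\<bar> < \<delta>" for s
  proof -
    have "\<bar>k * f (ts_sigma T t) - k * f s - k * D * (ts_sigma T t - s)\<bar>
        = \<bar>k\<bar> * \<bar>f (ts_sigma T t) - f s - D * (ts_sigma T t - s)\<bar>"
      by (simp add: abs_mult[symmetric] algebra_simps)
    also have "\<dots> \<le> \<bar>k\<bar> * (\<epsilon> / (\<bar>k\<bar> + 1) * \<bar>ts_sigma T t - s\<bar>)"
      using \<delta> that by (intro mult_left_mono) auto
    also have "\<dots> = \<bar>k\<bar> * (\<epsilon> / (\<bar>k\<bar> + 1)) * \<bar>ts_sigma T t - s\<bar>"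
      by (simp only: mult.assoc)
    also have "\<dots> \<le> \<epsilon> * \<bar>ts_sigma T t - s\<bar>"
      using \<open>\<epsilon> > 0\<close> by (intro mult_right_mono) (auto simp: field_simps)
    finally show ?thesis .
  qed
  with \<open>\<delta> > 0\<close> show "\<exists>\<delta>>0. \<forall>s\<in>T. \<bar>s - t\<bar> < \<delta> \<longrightarrow>
      \<bar>k * f (ts_sigma T t) - k * f s - k * D * (ts_sigma T t - s)\<bar> \<le> \<epsilon> * \<bar>ts_sigma T t - s\<bar>"
    by blast
qed

lemma has_delta_derivative_nonneg_imp_le:
  assumes "closed T" "s \<in> T" "r \<in> T" "s \<le> r"
    and f: "\<And>t. t \<in> T \<Longrightarrow> has_delta_derivative T f (D t) t"
    and D: "\<And>t. t \<in> T \<Longrightarrow> D t \<ge> 0"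
  shows "f s \<le> f r"
  using assms(1-4)
proof (rule ts_mono_criterion)
  show "(f \<longlongrightarrow> f t) (at t within T)" if "t \<in> T" for t
    using has_delta_derivative_imp_tendsto[OF f that] that .
  show "f t \<le> f (ts_sigma T t)" if "t \<in> T" "t < ts_sigma T t" for t
    using has_delta_derivative_jump[OF f that(1)] D[of t] that by simp
  show "\<exists>D\<ge>0. (f has_real_derivative D) (at t within T)" if "t \<in> T" "ts_sigma T t = t" for t
    using has_delta_derivative_imp_has_real_derivative[OF f that(2)] D that(1) by blast
qed

lemma has_delta_derivative_nonpos_imp_ge:
  assumes "closed T" "s \<in> T" "r \<in> T" "s \<le> r"
    and f: "\<And>t. t \<in> T \<Longrightarrow> has_delta_derivative T f (D t) t"
    and D: "\<And>t. t \<in> T \<Longrightarrow> D t \<le> 0"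
  shows "f r \<le> f s"
proof -
  have "- f s \<le> - f r"
    using assms(1-4)
    by (rule has_delta_derivative_nonneg_imp_le[where D = "\<lambda>t. - D t"])
      (use has_delta_derivative_cmult[OF f, of _ "-1"] D in auto)
  then show ?thesis by simp
qed

section \<open>Antiderivatives of rd-continuous functions\<close>

lemma tendsto_imp_eventually_bounded:
  fixes f :: "'a \<Rightarrow> real"
  assumes "(f \<longlongrightarrow> L) F"
  shows "\<exists>B. \<forall>\<^sub>F u in F. \<bar>f u\<bar> \<le> B"
proof -
  have "\<forall>\<^sub>F u in F. dist (f u) L < 1"
    using assms by (rule tendstoD) simp
  then show ?thesis
    by (intro exI[of _ "\<bar>L\<bar> + 1"]) (auto elim!: eventually_mono simp: dist_real_def)
qed

lemma rd_continuous_eventually_bounded_left: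
  assumes f: "rd_continuous T f" and "t \<in> T"
  shows "\<exists>B. \<forall>\<^sub>F u in at t within T \<inter> {..<t}. \<bar>f u\<bar> \<le> B"
proof (cases "ts_rho T t = t \<and> (\<exists>s\<in>T. s < t)")
  case True
  then obtain L where "(f \<longlongrightarrow> L) (at t within T \<inter> {..<t})"
    using f \<open>t \<in> T\<close> unfolding rd_continuous_def by blast
  then show ?thesis
    by (rule tendsto_imp_eventually_bounded)
next
  case False
  have "\<forall>\<^sub>F u in at t within T \<inter> {..<t}. False"
  proof (cases "ts_rho T t < t")
    case True
    then show ?thesis
      unfolding eventually_at using ts_rho_ge[of _ T t]
      by (intro exI[of _ "t - ts_rho T t"]) (force simp: dist_real_def)
  next
    case False
    then have "T \<inter> {..<t} = {}"
      using \<open>\<not> (ts_rho T t = t \<and> (\<exists>s\<in>T. s < t))\<close> ts_rho_le[of T t] by auto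
    then show ?thesis by simp
  qed
  then show ?thesis
    by (auto elim: eventually_mono)
qed

lemma rd_continuous_eventually_bounded_right:
  assumes f: "rd_continuous T f" and "t \<in> T"
  shows "\<exists>B. \<forall>\<^sub>F u in at t within T \<inter> {t<..}. \<bar>f u\<bar> \<le> B"
proof (cases "ts_sigma T t = t")
  case True
  then have "(f \<longlongrightarrow> f t) (at t within T \<inter> {t<..})"
    using f \<open>t \<in> T\<close> unfolding rd_continuous_def continuous_within
    by (blast intro: tendsto_within_subset)
  then show ?thesis
    by (rule tendsto_imp_eventually_bounded)
next
  case False
  then have "t < ts_sigma T t"
    using ts_sigma_ge[of t T] by simp
  then have "\<forall>\<^sub>F u in at t within T \<inter> {t<..}. False"
    unfolding eventually_at using ts_sigma_le[of _ T t]
    by (intro exI[of _ "ts_sigma T t - t"]) (force simp: dist_real_def)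
  then show ?thesis
    by (auto elim: eventually_mono)
qed

lemma rd_continuous_eventually_bounded:
  assumes "rd_continuous T f" "t \<in> T"
  obtains B where "\<forall>\<^sub>F u in at t within T. \<bar>f u\<bar> \<le> B"
proof -
  obtain B1 B2 where B1: "\<forall>\<^sub>F u in at t within T \<inter> {..<t}. \<bar>f u\<bar> \<le> B1"
    and B2: "\<forall>\<^sub>F u in at t within T \<inter> {t<..}. \<bar>f u\<bar> \<le> B2"
    using rd_continuous_eventually_bounded_left[OF assms]
      rd_continuous_eventually_bounded_right[OF assms] by blast
  have "at t within T = at t within (T \<inter> {..<t} \<union> T \<inter> {t<..})"
    by (rule at_within_nhd[of _ UNIV]) auto
  then have "at t within T = sup (at t within T \<inter> {..<t}) (at t within T \<inter> {t<..})"
    by (simp only: at_within_union)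
  then have "\<forall>\<^sub>F u in at t within T. \<bar>f u\<bar> \<le> max B1 B2"
    using B1 B2 by (auto simp: eventually_sup elim!: eventually_mono)
  then show ?thesis by (rule that)
qed

lemma rd_continuous_bounded_on_compact:
  assumes f: "rd_continuous T f" and K: "compact K" "K \<subseteq> T"
  obtains B where "\<And>s. s \<in> K \<Longrightarrow> \<bar>f s\<bar> \<le> B"
proof -
  have "\<exists>B. \<forall>s\<in>K. \<bar>f s\<bar> \<le> B"
  proof (rule ccontr)
    assume "\<not> ?thesis"
    then have "\<forall>n::nat. \<exists>s\<in>K. real n < \<bar>f s\<bar>"
      by (meson not_le)
    then obtain q where q: "\<And>n. q n \<in> K" "\<And>n. real n < \<bar>f (q n)\<bar>"
      by (metis (mono_tags))
    obtain l r where "l \<in> K" "strict_mono r" and lim: "(q \<circ> r) \<longlonglongrightarrow> l"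
      using seq_compactE[OF compact_imp_seq_compact[OF K(1)], of q] q(1) by blast
    obtain B where "\<forall>\<^sub>F u in at l within T. \<bar>f u\<bar> \<le> B"
      using rd_continuous_eventually_bounded[OF f] \<open>l \<in> K\<close> K(2) by blast
    then have "\<forall>\<^sub>F u in nhds l. u \<in> T \<longrightarrow> \<bar>f u\<bar> \<le> max B \<bar>f l\<bar>"
      unfolding eventually_at_filter by eventually_elim auto
    obtain N :: nat where N: "max B \<bar>f l\<bar> < N"
      using reals_Archimedean2 by blast
    from lim[unfolded filterlim_iff, rule_format, OF \<open>\<forall>\<^sub>F u in nhds l. _\<close>]
    have "\<forall>\<^sub>F n in sequentially. \<bar>f (q (r n))\<bar> \<le> max B \<bar>f l\<bar>"
      using q(1) K(2) by (auto elim!: eventually_mono)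
    moreover have "\<forall>\<^sub>F n in sequentially. N \<le> n"
      by (rule eventually_ge_at_top)
    ultimately have "\<forall>\<^sub>F n in sequentially. False"
    proof eventually_elim
      case (elim n)
      then show False
        using N q(2)[of "r n"] seq_suble[OF \<open>strict_mono r\<close>, of n] by linarith
    qed
    then show False by simp
  qed
  with that show ?thesis by blast
qed

text \<open>Junk value \<open>Sup {}\<close> when no point of \<open>T\<close> lies at or below \<open>r\<close>.\<close>
definition ts_floor :: "real set \<Rightarrow> real \<Rightarrow> real" where
  "ts_floor T r = Sup {s\<in>T. s \<le> r}"

lemma le_ts_floor:
  assumes "s \<in> T" "s \<le> r"
  shows "s \<le> ts_floor T r"
  unfolding ts_floor_def using assms by (intro cSup_upper bdd_aboveI[of _ r]) auto

lemma ts_floor_le: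
  assumes "a \<in> T" "a \<le> r"
  shows "ts_floor T r \<le> r"
  unfolding ts_floor_def using assms by (intro cSup_least) auto

lemma ts_floor_in:
  assumes "closed T" "a \<in> T" "a \<le> r"
  shows "ts_floor T r \<in> T"
  unfolding ts_floor_def using assms
  by (intro closed_subset_contains_Sup) (auto intro: bdd_aboveI[of _ r])

lemma ts_floor_eq: "t \<in> T \<Longrightarrow> ts_floor T t = t"
  using le_ts_floor[of t T t] ts_floor_le[of t T t] by simp

lemma ts_floor_eq_in_gap:
  assumes "closed T" "t \<in> T" "t \<le> r" "r < ts_sigma T t"
  shows "ts_floor T r = t"
proof (rule ccontr)
  assume "ts_floor T r \<noteq> t"
  then have "t < ts_floor T r"
    using le_ts_floor[OF assms(2,3)] by simp
  then have "ts_sigma T t \<le> ts_floor T r"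
    using ts_sigma_le ts_floor_in[OF assms(1-3)] by blast
  then show False
    using ts_floor_le[OF assms(2,3)] assms(4) by simp
qed

lemma tendsto_ts_floor:
  assumes "t \<in> T" "ts_rho T t = t" "s \<in> T" "s < t"
  shows "(ts_floor T \<longlongrightarrow> t) (at t)"
proof (rule tendstoI)
  fix \<epsilon> :: real assume "\<epsilon> > 0"
  then obtain u where u: "u \<in> T" "t - \<epsilon> < u" "u < t"
    using ts_rho_left_dense[OF assms(2-4)] by blast
  have "dist (ts_floor T r) t < \<epsilon>" if "dist r t < t - u" for r
  proof (cases "t \<le> r")
    case True
    then show ?thesis
      using le_ts_floor[OF \<open>t \<in> T\<close> True] ts_floor_le[OF \<open>t \<in> T\<close> True] that u
      by (auto simp: dist_real_def)
  next
    case False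
    moreover have "u \<le> r"
      using that by (auto simp: dist_real_def)
    ultimately show ?thesis
      using le_ts_floor[OF u(1) \<open>u \<le> r\<close>] ts_floor_le[OF u(1) \<open>u \<le> r\<close>] u
      by (auto simp: dist_real_def)
  qed
  with u show "\<forall>\<^sub>F r in at t. dist (ts_floor T r) t < \<epsilon>"
    unfolding eventually_at by (intro exI[of _ "t - u"]) auto
qed

lemma isCont_rd_continuous_ts_floor:
  assumes T: "closed T" and f: "rd_continuous T f"
    and a: "a \<in> T" "a < r" and r: "r \<notin> ts_scattered T"
  shows "isCont (\<lambda>r. f (ts_floor T r)) r"
proof (cases "r \<in> T")
  case True
  then have "ts_sigma T r = r" "ts_rho T r = r"
    using r ts_sigma_ge[of r T] ts_rho_le[of T r] by (auto simp: ts_scattered_def)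
  then have "continuous (at r within T) f"
    using f True unfolding rd_continuous_def by blast
  moreover have "\<forall>\<^sub>F u in at r. ts_floor T u \<in> T"
    unfolding eventually_at using a
    by (intro exI[of _ "r - a"]) (auto simp: dist_real_def intro!: ts_floor_in[OF T])
  moreover have "(ts_floor T \<longlongrightarrow> r) (at r)"
    using tendsto_ts_floor \<open>ts_rho T r = r\<close> True a by blast
  ultimately show ?thesis
    unfolding isCont_def using ts_floor_eq[OF True] by (metis continuous_within_tendsto_compose)
next
  case False
  then obtain e where "e > 0" and e: "ball r e \<subseteq> - T"
    using T open_contains_ball[of "- T"] by blast
  have same: "ts_floor T u = ts_floor T r" if "dist u r < e" for u
  proof -
    have "s \<le> u \<longleftrightarrow> s \<le> r" if "s \<in> T" for s
      using e \<open>dist u r < e\<close> that by (force simp: dist_real_def subset_iff)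
    then show ?thesis
      unfolding ts_floor_def by (metis (mono_tags, lifting))
  qed
  have "\<forall>\<^sub>F u in at r. f (ts_floor T u) = f (ts_floor T r)"
    unfolding eventually_at
  proof (intro exI[of _ e] conjI ballI impI)
    fix u assume "u \<noteq> r \<and> dist u r < e"
    then show "f (ts_floor T u) = f (ts_floor T r)"
      using same[of u] by simp
  qed (use \<open>e > 0\<close> in simp)
  then show ?thesis
    unfolding isCont_def by (rule tendsto_eventually)
qed

lemma rd_continuous_ts_floor_integrable:
  assumes T: "closed T" and f: "rd_continuous T f" and p: "p \<in> T"
  shows "(\<lambda>r. f (ts_floor T r)) integrable_on {p..q}"
proof -
  let ?h = "\<lambda>r. f (ts_floor T r)"
  let ?S = "{p<..q} - ts_scattered T"
  obtain B where B: "\<And>s. s \<in> T \<inter> {p..q} \<Longrightarrow> \<bar>f s\<bar> \<le> B"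
    using rd_continuous_bounded_on_compact[OF f, of "T \<inter> {p..q}"] T
    by (auto simp: closed_Int_compact)
  have S: "?S \<in> sets lebesgue"
    by (intro sets.Diff negligible_imp_sets[OF negligible_ts_scattered]) simp
  have "?h integrable_on ?S"
  proof (rule measurable_bounded_by_integrable_imp_integrable_real)
    have "continuous_on ?S ?h"
      using isCont_rd_continuous_ts_floor[OF T f p]
      by (intro continuous_at_imp_continuous_on) auto
    then show "?h \<in> borel_measurable (lebesgue_on ?S)"
      using S by (rule continuous_imp_measurable_on_sets_lebesgue)
    show "(\<lambda>x. B) integrable_on ?S"
      using S by (intro integrable_on_const bounded_set_imp_lmeasurable)
        (auto intro: bounded_subset[OF bounded_closed_interval[of p q]])
    show "\<bar>?h x\<bar> \<le> B" if "x \<in> ?S" for x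
      using that p ts_floor_le[OF p, of x] le_ts_floor[OF p, of x] ts_floor_in[OF T p, of x]
      by (intro B) auto
  qed (use S in simp)
  then show ?thesis
  proof (rule integrable_spike_set)
    show "negligible {x \<in> ?S - {p..q}. ?h x \<noteq> 0}"
      by (rule negligible_subset[OF negligible_empty]) auto
    show "negligible {x \<in> {p..q} - ?S. ?h x \<noteq> 0}"
      by (rule negligible_subset[of "insert p (ts_scattered T)"])
        (auto simp: negligible_ts_scattered)
  qed
qed

lemma integral_deviation_le:
  fixes h :: "real \<Rightarrow> real"
  assumes "a \<le> b" and h: "h integrable_on {a..b}" and K: "\<And>r. r \<in> {a..b} \<Longrightarrow> \<bar>h r - c\<bar> \<le> K"
  shows "\<bar>integral {a..b} h - c * (b - a)\<bar> \<le> K * (b - a)"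
proof -
  have "\<bar>h a - c\<bar> \<le> K"
    using K \<open>a \<le> b\<close> by simp
  then have "0 \<le> K"
    by (rule order_trans[OF abs_ge_zero])
  have int: "((\<lambda>r. h r - c) has_integral integral {a..b} h - c * (b - a)) {a..b}"
    using has_integral_diff[OF integrable_integral[OF h] has_integral_const_real[of c a b]] \<open>a \<le> b\<close>
    by (simp add: mult.commute)
  have bound: "\<And>r. r \<in> {a..b} - {} \<Longrightarrow> norm (h r - c) \<le> K"
    using K by simp
  from has_integral_bound_real[OF \<open>0 \<le> K\<close> finite.emptyI int bound] \<open>a \<le> b\<close> show ?thesis
    by simp
qed

lemma integral_ts_floor_gap:
  assumes T: "closed T" and t: "t \<in> T" and "t < ts_sigma T t"
  shows "integral {t..ts_sigma T t} (\<lambda>r. f (ts_floor T r)) = f t * (ts_sigma T t - t)"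
proof -
  have "integral {t..ts_sigma T t} (\<lambda>r. f (ts_floor T r)) = integral {t..ts_sigma T t} (\<lambda>_. f t)"
    using ts_floor_eq_in_gap[OF T t]
    by (intro integral_spike[OF negligible_sing[of "ts_sigma T t"]]) auto
  with assms(3) show ?thesis
    by simp
qed

lemma ts_floor_integral_deviation_bounded:
  assumes T: "closed T" and f: "rd_continuous T f" and t: "t \<in> T"
  obtains K where "K \<ge> 0" and "\<And>s. s \<in> T \<Longrightarrow> t - 1 \<le> s \<Longrightarrow> s \<le> t \<Longrightarrow>
    \<bar>integral {s..t} (\<lambda>r. f (ts_floor T r)) - f t * (t - s)\<bar> \<le> K * (t - s)"
proof -
  obtain B where B: "\<And>u. u \<in> T \<inter> {t - 1..t} \<Longrightarrow> \<bar>f u\<bar> \<le> B"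
    using rd_continuous_bounded_on_compact[OF f, of "T \<inter> {t - 1..t}"] T
    by (auto simp: closed_Int_compact)
  have "B + \<bar>f t\<bar> \<ge> 0"
    using B[of t] t by simp
  moreover have "\<bar>integral {s..t} (\<lambda>r. f (ts_floor T r)) - f t * (t - s)\<bar> \<le> (B + \<bar>f t\<bar>) * (t - s)"
    if s: "s \<in> T" "t - 1 \<le> s" "s \<le> t" for s
  proof -
    have "\<bar>f (ts_floor T r) - f t\<bar> \<le> B + \<bar>f t\<bar>" if "r \<in> {s..t}" for r
    proof -
      have "s \<le> ts_floor T r" "ts_floor T r \<le> r" "ts_floor T r \<in> T"
        using le_ts_floor[OF s(1)] ts_floor_le[OF s(1)] ts_floor_in[OF T s(1)] that by auto
      then have "\<bar>f (ts_floor T r)\<bar> \<le> B"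
        using B that s(2) by auto
      then show ?thesis
        by linarith
    qed
    with \<open>s \<le> t\<close> rd_continuous_ts_floor_integrable[OF T f s(1)] show ?thesis
      by (rule integral_deviation_le)
  qed
  ultimately show ?thesis
    using that by blast
qed

context
  fixes T :: "real set" and f F :: "real \<Rightarrow> real"
  assumes T: "closed T" and f: "rd_continuous T f"
    and F: "\<And>p q. p \<in> T \<Longrightarrow> p \<le> q \<Longrightarrow> F q - F p = integral {p..q} (\<lambda>r. f (ts_floor T r))"
begin

lemma has_delta_derivative_floor_integral_right_dense:
  assumes "t \<in> T" "ts_sigma T t = t"
  shows "has_delta_derivative T F (f t) t"
  unfolding has_delta_derivative_def \<open>ts_sigma T t = t\<close>
proof (intro allI impI)
  fix \<epsilon> :: real assume "\<epsilon> > 0"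
  then obtain d where "d > 0" and d: "\<forall>u\<in>T. dist u t < d \<longrightarrow> dist (f u) (f t) < \<epsilon>"
    using f assms unfolding rd_continuous_def continuous_within_eps_delta by blast
  have bound: "\<bar>F q - F p - f t * (q - p)\<bar> \<le> \<epsilon> * (q - p)"
    if "p \<in> T" "p \<le> q" "\<bar>p - t\<bar> < d" "\<bar>q - t\<bar> < d" for p q
  proof -
    have "\<bar>f (ts_floor T r) - f t\<bar> \<le> \<epsilon>" if "r \<in> {p..q}" for r
    proof -
      have "p \<le> ts_floor T r" "ts_floor T r \<le> r" "ts_floor T r \<in> T"
        using le_ts_floor[OF \<open>p \<in> T\<close>] ts_floor_le[OF \<open>p \<in> T\<close>] ts_floor_in[OF T \<open>p \<in> T\<close>] that
        by auto
      then have "dist (ts_floor T r) t < d"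
        using that \<open>\<bar>p - t\<bar> < d\<close> \<open>\<bar>q - t\<bar> < d\<close> by (auto simp: dist_real_def)
      with d \<open>ts_floor T r \<in> T\<close> show ?thesis
        by (auto simp: dist_real_def)
    qed
    with \<open>p \<le> q\<close> rd_continuous_ts_floor_integrable[OF T f \<open>p \<in> T\<close>]
    have "\<bar>integral {p..q} (\<lambda>r. f (ts_floor T r)) - f t * (q - p)\<bar> \<le> \<epsilon> * (q - p)"
      by (rule integral_deviation_le)
    then show ?thesis
      using F[OF \<open>p \<in> T\<close> \<open>p \<le> q\<close>] by simp
  qed
  have "\<bar>F t - F s - f t * (t - s)\<bar> \<le> \<epsilon> * \<bar>t - s\<bar>" if "s \<in> T" "\<bar>s - t\<bar> < d" for s
  proof (cases "s \<le> t")
    case True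
    then show ?thesis
      using bound[of s t] that \<open>d > 0\<close> by simp
  next
    case False
    then have "\<bar>F s - F t - f t * (s - t)\<bar> \<le> \<epsilon> * (s - t)"
      using bound[of t s] that \<open>t \<in> T\<close> \<open>d > 0\<close> by simp
    moreover have "F t - F s - f t * (t - s) = - (F s - F t - f t * (s - t))"
      by (simp add: algebra_simps)
    ultimately show ?thesis
      using False by (simp add: abs_minus_commute[of t s])
  qed
  with \<open>d > 0\<close> show "\<exists>\<delta>>0. \<forall>s\<in>T. \<bar>s - t\<bar> < \<delta> \<longrightarrow>
      \<bar>F t - F s - f t * (t - s)\<bar> \<le> \<epsilon> * \<bar>t - s\<bar>"
    by blast
qed

lemma has_delta_derivative_floor_integral_right_scattered:
  assumes t: "t \<in> T" and "t < ts_sigma T t"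
  shows "has_delta_derivative T F (f t) t"
  unfolding has_delta_derivative_def
proof (intro allI impI)
  fix \<epsilon> :: real assume "\<epsilon> > 0"
  define \<sigma> where "\<sigma> = ts_sigma T t"
  define \<mu> where "\<mu> = \<sigma> - t"
  have "\<mu> > 0"
    using assms by (simp add: \<mu>_def \<sigma>_def)
  obtain K where "K \<ge> 0" and K: "\<And>s. s \<in> T \<Longrightarrow> t - 1 \<le> s \<Longrightarrow> s \<le> t \<Longrightarrow>
      \<bar>integral {s..t} (\<lambda>r. f (ts_floor T r)) - f t * (t - s)\<bar> \<le> K * (t - s)"
    using ts_floor_integral_deviation_bounded[OF T f t] by blast
  define \<delta> where "\<delta> = min 1 (min \<mu> (\<epsilon> * \<mu> / (K + 1)))"
  have "\<delta> > 0" "\<delta> \<le> 1" "\<delta> \<le> \<mu>" "\<delta> \<le> \<epsilon> * \<mu> / (K + 1)"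
    using \<open>\<mu> > 0\<close> \<open>\<epsilon> > 0\<close> \<open>K \<ge> 0\<close> by (simp_all add: \<delta>_def)
  have "\<bar>F \<sigma> - F s - f t * (\<sigma> - s)\<bar> \<le> \<epsilon> * \<bar>\<sigma> - s\<bar>" if s: "s \<in> T" "\<bar>s - t\<bar> < \<delta>" for s
  proof -
    have "s \<le> t"
    proof (rule ccontr)
      assume "\<not> s \<le> t"
      then have "\<sigma> \<le> s"
        using ts_sigma_le[OF s(1)] by (simp add: \<sigma>_def)
      with s(2) \<open>\<delta> \<le> \<mu>\<close> show False
        by (simp add: \<mu>_def)
    qed
    have "F \<sigma> - F s = integral {s..\<sigma>} (\<lambda>r. f (ts_floor T r))"
      using F[OF s(1)] \<open>s \<le> t\<close> \<open>\<mu> > 0\<close> by (simp add: \<mu>_def)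
    also have "\<dots> = integral {s..t} (\<lambda>r. f (ts_floor T r)) + f t * \<mu>"
      using Henstock_Kurzweil_Integration.integral_combine[OF \<open>s \<le> t\<close> _
          rd_continuous_ts_floor_integrable[OF T f s(1)], of \<sigma>] \<open>\<mu> > 0\<close>
        integral_ts_floor_gap[OF T t assms(2)]
      by (simp add: \<mu>_def \<sigma>_def)
    finally have "\<bar>F \<sigma> - F s - f t * (\<sigma> - s)\<bar> \<le> K * (t - s)"
      using K[OF s(1)] s(2) \<open>\<delta> \<le> 1\<close> \<open>s \<le> t\<close> by (simp add: \<mu>_def algebra_simps)
    also have "\<dots> \<le> K * (\<epsilon> * \<mu> / (K + 1))"
      using s(2) \<open>s \<le> t\<close> \<open>K \<ge> 0\<close> \<open>\<delta> \<le> \<epsilon> * \<mu> / (K + 1)\<close> by (intro mult_left_mono) auto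
    also have "\<dots> \<le> \<epsilon> * \<mu>"
      using \<open>K \<ge> 0\<close> \<open>\<epsilon> > 0\<close> \<open>\<mu> > 0\<close> by (simp add: field_simps)
    also have "\<dots> \<le> \<epsilon> * \<bar>\<sigma> - s\<bar>"
      using \<open>s \<le> t\<close> \<open>\<epsilon> > 0\<close> by (intro mult_left_mono) (auto simp: \<mu>_def)
    finally show ?thesis .
  qed
  with \<open>\<delta> > 0\<close> show "\<exists>\<delta>>0. \<forall>s\<in>T. \<bar>s - t\<bar> < \<delta> \<longrightarrow>
      \<bar>F (ts_sigma T t) - F s - f t * (ts_sigma T t - s)\<bar> \<le> \<epsilon> * \<bar>ts_sigma T t - s\<bar>"
    unfolding \<sigma>_def by blast
qed

end

lemma integral_signed_diff:
  fixes h :: "real \<Rightarrow> real" and a p q :: real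
  defines "F \<equiv> \<lambda>t. if a \<le> t then integral {a..t} h else - integral {t..a} h"
  assumes "p \<le> q" "h integrable_on {min a p..max a q}"
  shows "F q - F p = integral {p..q} h"
proof -
  consider "a \<le> p" | "p < a" "a \<le> q" | "q < a"
    by linarith
  then show ?thesis
  proof cases
    case 1
    then show ?thesis
      using Henstock_Kurzweil_Integration.integral_combine[OF 1 \<open>p \<le> q\<close>, of h] assms(2,3)
      by (simp add: F_def)
  next
    case 2
    then show ?thesis
      using Henstock_Kurzweil_Integration.integral_combine[OF _ 2(2), of p h] assms(3)
      by (simp add: F_def)
  next
    case 3
    then show ?thesis
      using Henstock_Kurzweil_Integration.integral_combine[OF \<open>p \<le> q\<close>, of a h] assms(2,3)
      by (simp add: F_def)
  qed
qed

lemma rd_continuous_has_antiderivative: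
  assumes T: "time_scale T" and f: "rd_continuous T f"
  obtains F where "\<And>t. t \<in> T \<Longrightarrow> has_delta_derivative T F (f t) t"
proof -
  obtain a where "a \<in> T" and "closed T"
    using T by (auto simp: time_scale_def)
  define h where "h = (\<lambda>r. f (ts_floor T r))"
  define F where "F = (\<lambda>t. if a \<le> t then integral {a..t} h else - integral {t..a} h)"
  have F_diff: "F q - F p = integral {p..q} (\<lambda>r. f (ts_floor T r))" if "p \<in> T" "p \<le> q" for p q
  proof -
    have "min a p \<in> T"
      using \<open>a \<in> T\<close> \<open>p \<in> T\<close> by (simp add: min_def)
    then have "h integrable_on {min a p..max a q}"
      unfolding h_def by (rule rd_continuous_ts_floor_integrable[OF \<open>closed T\<close> f])
    with \<open>p \<le> q\<close> show ?thesis
      unfolding F_def h_def by (rule integral_signed_diff)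
  qed
  have "has_delta_derivative T F (f t) t" if "t \<in> T" for t
  proof (cases "ts_sigma T t = t")
    case True
    with \<open>closed T\<close> f F_diff that show ?thesis
      by (rule has_delta_derivative_floor_integral_right_dense)
  next
    case False
    then have "t < ts_sigma T t"
      using ts_sigma_ge[of t T] by simp
    with \<open>closed T\<close> f F_diff that show ?thesis
      by (rule has_delta_derivative_floor_integral_right_scattered)
  qed
  with that show ?thesis by blast
qed

lemma ts_kappa_eq_self:
  assumes "\<forall>r. \<exists>t\<in>T. r < t"
  shows "ts_kappa T = T"
  using assms by (force simp: ts_kappa_def not_le)

text \<open>\<open>delta_integral\<close> uses a Hilbert-chosen antiderivative, which is a genuine one only
  because some antiderivative exists.\<close>
lemma delta_integral_antiderivative:
  assumes "time_scale T" "\<forall>r. \<exists>t\<in>T. r < t" "rd_continuous T f"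
  obtains F where "\<And>t. t \<in> T \<Longrightarrow> has_delta_derivative T F (f t) t"
    and "\<And>a b. delta_integral T f a b = F b - F a"
proof -
  define F where "F = (SOME F. \<forall>t\<in>ts_kappa T. has_delta_derivative T F (f t) t)"
  obtain G where "\<And>t. t \<in> T \<Longrightarrow> has_delta_derivative T G (f t) t"
    using rd_continuous_has_antiderivative assms(1,3) by blast
  then have "\<exists>F. \<forall>t\<in>ts_kappa T. has_delta_derivative T F (f t) t"
    unfolding ts_kappa_eq_self[OF assms(2)] by blast
  then have "\<forall>t\<in>ts_kappa T. has_delta_derivative T F (f t) t"
    unfolding F_def by (rule someI_ex)
  moreover have "delta_integral T f a b = F b - F a" for a b
    unfolding delta_integral_def F_def Let_def ..
  ultimately show ?thesis
    using that unfolding ts_kappa_eq_self[OF assms(2)] by blast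
qed

lemma delta_integral_diverges_antiderivative:
  assumes "time_scale T" "\<forall>r. \<exists>t\<in>T. r < t" "rd_continuous T f" "delta_integral_diverges T f t0"
  obtains P where "\<And>t. t \<in> T \<Longrightarrow> has_delta_derivative T P (f t) t"
    and "filterlim P at_top (inf at_top (principal T))"
proof -
  obtain P where P: "\<And>t. t \<in> T \<Longrightarrow> has_delta_derivative T P (f t) t"
    and int: "\<And>a b. delta_integral T f a b = P b - P a"
    using delta_integral_antiderivative[OF assms(1-3)] by blast
  have "filterlim (\<lambda>t. P t0 + (P t - P t0)) at_top (inf at_top (principal T))"
    using assms(4) unfolding delta_integral_diverges_def int
    by (rule filterlim_tendsto_add_at_top[OF tendsto_const])
  then have "filterlim P at_top (inf at_top (principal T))"
    by simp
  with P show ?thesis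
    by (rule that)
qed

section \<open>Limits along an unbounded time scale\<close>

lemma eventually_ts_at_top:
  "(\<And>t. t \<in> T \<Longrightarrow> t0 \<le> t \<Longrightarrow> P t) \<Longrightarrow> eventually P (inf at_top (principal (T :: real set)))"
  unfolding eventually_inf_principal eventually_at_top_linorder by blast

lemma ts_at_top_neq_bot:
  assumes "\<forall>r. \<exists>t\<in>T. r < t"
  shows "inf at_top (principal (T :: real set)) \<noteq> bot"
proof
  assume "inf at_top (principal T) = bot"
  then obtain r where "\<forall>t\<ge>r. t \<notin> T"
    unfolding trivial_limit_def eventually_inf_principal eventually_at_top_linorder by auto
  with assms show False
    by (meson less_imp_le)
qed

lemma filterlim_at_top_ts_not_bounded:
  fixes P :: "real \<Rightarrow> real"
  assumes "filterlim P at_top (inf at_top (principal T))" "\<forall>r. \<exists>t\<in>T. r < t"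
    and "\<And>t. t \<in> T \<Longrightarrow> t0 \<le> t \<Longrightarrow> P t \<le> C"
  shows False
proof -
  have "\<forall>\<^sub>F t in inf at_top (principal T). P t \<le> C"
    using assms(3) by (rule eventually_ts_at_top)
  moreover have "\<forall>\<^sub>F t in inf at_top (principal T). C < P t"
    using assms(1) by (simp add: filterlim_at_top_dense)
  ultimately have "\<forall>\<^sub>F t in inf at_top (principal T). False"
    by eventually_elim simp
  with ts_at_top_neq_bot[OF assms(2)] show False
    by (simp add: trivial_limit_def)
qed

lemma ts_antimono_tendsto_Inf:
  fixes f :: "real \<Rightarrow> real"
  assumes "T \<noteq> {}" and bdd: "bdd_below (f ` T)"
    and antimono: "\<And>s r. s \<in> T \<Longrightarrow> r \<in> T \<Longrightarrow> s \<le> r \<Longrightarrow> f r \<le> f s"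
  shows "(f \<longlongrightarrow> Inf (f ` T)) (inf at_top (principal T))"
proof (rule order_tendstoI)
  fix a assume "a < Inf (f ` T)"
  then have "a < f t" if "t \<in> T" for t
    using cInf_lower[OF imageI[OF that] bdd] by linarith
  then show "\<forall>\<^sub>F t in inf at_top (principal T). a < f t"
    unfolding eventually_inf_principal by (intro always_eventually) blast
next
  fix a assume "Inf (f ` T) < a"
  then obtain s where "s \<in> T" "f s < a"
    using cInf_lessD[of "f ` T" a] \<open>T \<noteq> {}\<close> by blast
  then have "f t < a" if "t \<in> T" "s \<le> t" for t
    using antimono[of s t] that by linarith
  then show "\<forall>\<^sub>F t in inf at_top (principal T). f t < a"
    by (rule eventually_ts_at_top)
qed

text \<open>If the limit \<open>\<beta>\<close> of \<open>y\<close> were positive, \<open>y + \<beta> P\<close> would be nonincreasing and \<open>P\<close> bounded.\<close>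
lemma ts_tendsto_zero_if_delta_derivative_le:
  fixes y p P D :: "real \<Rightarrow> real"
  assumes T: "closed T" "\<forall>r. \<exists>t\<in>T. r < t"
    and y_nonneg: "\<And>t. t \<in> T \<Longrightarrow> 0 \<le> y t" and p_nonneg: "\<And>t. t \<in> T \<Longrightarrow> 0 \<le> p t"
    and y: "\<And>t. t \<in> T \<Longrightarrow> has_delta_derivative T y (D t) t"
    and D: "\<And>t. t \<in> T \<Longrightarrow> D t \<le> - p t * y (ts_sigma T t)"
    and P: "\<And>t. t \<in> T \<Longrightarrow> has_delta_derivative T P (p t) t"
    and P_lim: "filterlim P at_top (inf at_top (principal T))"
  shows "(y \<longlongrightarrow> 0) (inf at_top (principal T))"
proof -
  define \<beta> where "\<beta> = Inf (y ` T)"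
  have "T \<noteq> {}"
    using T(2) by blast
  have bdd: "bdd_below (y ` T)"
    using y_nonneg by (intro bdd_belowI2[of _ 0])
  have y_ge: "\<beta> \<le> y t" if "t \<in> T" for t
    unfolding \<beta>_def using cInf_lower[OF imageI[OF that] bdd] .
  have "0 \<le> \<beta>"
    unfolding \<beta>_def using \<open>T \<noteq> {}\<close> y_nonneg by (auto intro: cInf_greatest)
  have D_le: "D t \<le> - p t * \<beta>" if "t \<in> T" for t
  proof -
    have "p t * \<beta> \<le> p t * y (ts_sigma T t)"
      using y_ge[OF ts_sigma_in[OF T(1) that]] p_nonneg[OF that] by (rule mult_left_mono)
    with D[OF that] show ?thesis by linarith
  qed
  have "(y \<longlongrightarrow> \<beta>) (inf at_top (principal T))"
    unfolding \<beta>_def using \<open>T \<noteq> {}\<close> bdd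
  proof (rule ts_antimono_tendsto_Inf)
    show "y r \<le> y s" if "s \<in> T" "r \<in> T" "s \<le> r" for s r
      using T(1) that y
    proof (rule has_delta_derivative_nonpos_imp_ge)
      show "D t \<le> 0" if "t \<in> T" for t
        using D_le[OF that] mult_nonneg_nonneg[OF p_nonneg[OF that] \<open>0 \<le> \<beta>\<close>] by linarith
    qed
  qed
  moreover have "\<beta> = 0"
  proof (rule ccontr)
    assume "\<beta> \<noteq> 0"
    with \<open>0 \<le> \<beta>\<close> have "\<beta> > 0" by simp
    obtain t0 where t0: "t0 \<in> T"
      using \<open>T \<noteq> {}\<close> by blast
    have mono: "y t + \<beta> * P t \<le> y t0 + \<beta> * P t0" if "t \<in> T" "t0 \<le> t" for t
      using T(1) t0 that
    proof (rule has_delta_derivative_nonpos_imp_ge)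
      show "has_delta_derivative T (\<lambda>u. y u + \<beta> * P u) (D u + \<beta> * p u) u" if "u \<in> T" for u
        using that by (intro has_delta_derivative_add has_delta_derivative_cmult y P)
      show "D u + \<beta> * p u \<le> 0" if "u \<in> T" for u
        using D_le[OF that] by (simp add: mult.commute)
    qed
    have "P t \<le> P t0 + y t0 / \<beta>" if "t \<in> T" "t0 \<le> t" for t
    proof -
      have "\<beta> * (P t - P t0) \<le> y t0"
        using mono[OF that] y_nonneg[OF that(1)] by (simp add: algebra_simps)
      with \<open>\<beta> > 0\<close> show ?thesis
        by (simp add: field_simps)
    qed
    with P_lim T(2) show False
      by (rule filterlim_at_top_ts_not_bounded)
  qed
  ultimately show ?thesis by simp
qed

lemma mult_ln_one_minus_le:
  fixes k u v :: real
  assumes "0 \<le> v" "v < 1" "0 \<le> k" "k \<le> 1" "u \<le> k * v"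
  shows "k * ln (1 - v) \<le> ln (1 - u)"
proof -
  have "(1 - k) * ln 1 + k * ln (1 - v) \<le> ln ((1 - k) *\<^sub>R 1 + k *\<^sub>R (1 - v))"
    using assms by (intro concave_onD[OF ln_concave]) auto
  then have "k * ln (1 - v) \<le> ln (1 - k * v)"
    by (simp add: algebra_simps)
  also have "\<dots> \<le> ln (1 - u)"
    using assms mult_left_le_one_le[of v k] by simp
  finally show ?thesis .
qed

section \<open>The SIR model\<close>

locale sir_solution =
  fixes T :: "real set" and b c x y z :: "real \<Rightarrow> real"
  assumes closed: "closed T"
    and b_nonneg: "\<And>t. t \<in> T \<Longrightarrow> 0 \<le> b t"
    and b_le_c: "\<And>t. t \<in> T \<Longrightarrow> b t \<le> c t"
    and x_pos: "\<And>t. t \<in> T \<Longrightarrow> 0 < x t"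
    and y_pos: "\<And>t. t \<in> T \<Longrightarrow> 0 < y t"
    and x_deriv: "\<And>t. t \<in> T \<Longrightarrow> has_delta_derivative T x
      (- (b t * x t * y (ts_sigma T t) / (x t + y t))) t"
    and y_deriv: "\<And>t. t \<in> T \<Longrightarrow> has_delta_derivative T y
      (b t * x t * y (ts_sigma T t) / (x t + y t) - c t * y (ts_sigma T t)) t"
    and z_deriv: "\<And>t. t \<in> T \<Longrightarrow> has_delta_derivative T z (c t * y (ts_sigma T t)) t"
begin

definition incidence :: "real \<Rightarrow> real" where
  "incidence t = b t * x t * y (ts_sigma T t) / (x t + y t)"

lemma sigma_in: "t \<in> T \<Longrightarrow> ts_sigma T t \<in> T"
  using closed by (rule ts_sigma_in)

lemma x_deriv_incidence: "t \<in> T \<Longrightarrow> has_delta_derivative T x (- incidence t) t"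
  using x_deriv by (simp add: incidence_def)

lemma y_deriv_incidence:
  "t \<in> T \<Longrightarrow> has_delta_derivative T y (incidence t - c t * y (ts_sigma T t)) t"
  using y_deriv by (simp add: incidence_def)

lemma incidence_nonneg: "t \<in> T \<Longrightarrow> 0 \<le> incidence t"
  using b_nonneg x_pos y_pos y_pos[OF sigma_in] by (simp add: incidence_def less_imp_le add_pos_pos)

lemma incidence_le:
  assumes "t \<in> T"
  shows "incidence t \<le> b t * y (ts_sigma T t)"
proof -
  have "x t / (x t + y t) \<le> 1" "0 \<le> b t * y (ts_sigma T t)"
    using b_nonneg[OF assms] x_pos[OF assms] y_pos[OF assms] y_pos[OF sigma_in[OF assms]]
    by simp_all
  then have "b t * y (ts_sigma T t) * (x t / (x t + y t)) \<le> b t * y (ts_sigma T t)"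
    by (rule mult_left_le)
  then show ?thesis
    by (simp add: incidence_def ac_simps)
qed

lemma x_antimono: "s \<in> T \<Longrightarrow> r \<in> T \<Longrightarrow> s \<le> r \<Longrightarrow> x r \<le> x s"
  using closed _ _ _ x_deriv_incidence
  by (rule has_delta_derivative_nonpos_imp_ge) (use incidence_nonneg in auto)

lemma population_const:
  assumes "s \<in> T" "r \<in> T"
  shows "x r + y r + z r = x s + y s + z s"
proof -
  let ?N = "\<lambda>u. x u + y u + z u"
  have deriv: "has_delta_derivative T ?N 0 t" if "t \<in> T" for t
  proof -
    have "has_delta_derivative T ?N
        (- incidence t + (incidence t - c t * y (ts_sigma T t)) + c t * y (ts_sigma T t)) t"
      using that by (intro has_delta_derivative_add x_deriv_incidence y_deriv_incidence z_deriv)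
    then show ?thesis by simp
  qed
  have "?N u = ?N v" if "u \<in> T" "v \<in> T" "u \<le> v" for u v
  proof (rule antisym)
    show "?N u \<le> ?N v"
      using closed that deriv by (rule has_delta_derivative_nonneg_imp_le) auto
    show "?N v \<le> ?N u"
      using closed that deriv by (rule has_delta_derivative_nonpos_imp_ge) auto
  qed
  then show ?thesis
    using assms by (metis linear)
qed

lemma jump_multipliers:
  assumes t: "t \<in> T" and "t < ts_sigma T t"
    and a_def: "a = (ts_sigma T t - t) * y (ts_sigma T t) / (x t + y t)"
  shows "0 \<le> a"
    and "x (ts_sigma T t) = x t * (1 - b t * a)"
    and "x (ts_sigma T t) + y (ts_sigma T t) = (x t + y t) * (1 - c t * a)"
proof -
  define \<sigma> where "\<sigma> = ts_sigma T t"
  define S where "S = x t + y t"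
  have "S > 0"
    using x_pos[OF t] y_pos[OF t] by (simp add: S_def)
  then show "0 \<le> a"
    using y_pos[OF sigma_in[OF t]] assms(2) by (simp add: a_def S_def less_imp_le)
  have "S * a = (\<sigma> - t) * y \<sigma>"
    using \<open>S > 0\<close> by (simp add: \<sigma>_def a_def S_def)
  have jump_x: "x \<sigma> = x t + - incidence t * (\<sigma> - t)"
    unfolding \<sigma>_def by (rule has_delta_derivative_jump[OF x_deriv_incidence[OF t] t])
  have jump_y: "y \<sigma> = y t + (incidence t - c t * y \<sigma>) * (\<sigma> - t)"
    unfolding \<sigma>_def by (rule has_delta_derivative_jump[OF y_deriv_incidence[OF t] t])
  have "incidence t * (\<sigma> - t) = x t * (b t * a)"
    by (simp add: incidence_def a_def \<sigma>_def ac_simps)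
  with jump_x show "x (ts_sigma T t) = x t * (1 - b t * a)"
    by (simp add: \<sigma>_def algebra_simps)
  \<comment> \<open>\<open>jump_y\<close> has \<open>y \<sigma>\<close> on both sides, so it may only be used from right to left\<close>
  have "x \<sigma> + y \<sigma> = (x t + - incidence t * (\<sigma> - t)) + (y t + (incidence t - c t * y \<sigma>) * (\<sigma> - t))"
    by (simp only: jump_x[symmetric] jump_y[symmetric])
  also have "\<dots> = S - c t * ((\<sigma> - t) * y \<sigma>)"
    by (simp add: S_def algebra_simps)
  also have "\<dots> = S - c t * (S * a)"
    by (simp only: \<open>S * a = _\<close>)
  finally show "x (ts_sigma T t) + y (ts_sigma T t) = (x t + y t) * (1 - c t * a)"
    by (simp add: \<sigma>_def S_def algebra_simps)
qed

context
  fixes k :: real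
  assumes k: "0 \<le> k" "k \<le> 1" and b_le_kc: "\<And>t. t \<in> T \<Longrightarrow> b t \<le> k * c t"
begin

definition lyapunov :: "real \<Rightarrow> real" where
  "lyapunov t = ln (x t) - k * ln (x t + y t)"

text \<open>By the jump multipliers the increment is \<open>ln (1 - b a) - k ln (1 - c a)\<close>, which is
  nonnegative by \<open>b \<le> k c\<close> and concavity of \<open>ln\<close>.\<close>
lemma lyapunov_jump:
  assumes t: "t \<in> T" and "t < ts_sigma T t"
  shows "lyapunov t \<le> lyapunov (ts_sigma T t)"
proof -
  define \<sigma> where "\<sigma> = ts_sigma T t"
  define a where "a = (\<sigma> - t) * y \<sigma> / (x t + y t)"
  have "\<sigma> \<in> T"
    using sigma_in[OF t] by (simp add: \<sigma>_def)
  note jump = jump_multipliers[OF assms a_def[unfolded \<sigma>_def], folded \<sigma>_def]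
  have "0 < x t * (1 - b t * a)" "0 < (x t + y t) * (1 - c t * a)"
    using jump x_pos[OF \<open>\<sigma> \<in> T\<close>] y_pos[OF \<open>\<sigma> \<in> T\<close>] by simp_all
  then have "0 < 1 - b t * a" "0 < 1 - c t * a"
    using x_pos[OF t] y_pos[OF t] by (simp_all add: zero_less_mult_iff)
  have "0 \<le> c t * a"
    using b_nonneg[OF t] b_le_c[OF t] jump(1) by simp
  moreover have "b t * a \<le> k * (c t * a)"
    using mult_right_mono[OF b_le_kc[OF t] jump(1)] by (simp add: mult.assoc)
  ultimately have "k * ln (1 - c t * a) \<le> ln (1 - b t * a)"
    using \<open>0 < 1 - c t * a\<close> k by (intro mult_ln_one_minus_le) auto
  moreover have "ln (x \<sigma>) = ln (x t) + ln (1 - b t * a)"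
    using jump(2) x_pos[OF t] \<open>0 < 1 - b t * a\<close> by (simp add: ln_mult)
  moreover have "ln (x \<sigma> + y \<sigma>) = ln (x t + y t) + ln (1 - c t * a)"
    using jump(3) x_pos[OF t] y_pos[OF t] \<open>0 < 1 - c t * a\<close> by (simp add: ln_mult)
  ultimately show ?thesis
    by (simp add: lyapunov_def \<sigma>_def[symmetric] algebra_simps)
qed

lemma lyapunov_deriv:
  assumes t: "t \<in> T" and "ts_sigma T t = t"
  shows "(lyapunov has_real_derivative (k * c t - b t) * y t / (x t + y t)) (at t within T)"
proof -
  define S where "S = x t + y t"
  define X where "X = - (b t * x t * y t / S)"
  define Y where "Y = b t * x t * y t / S - c t * y t"
  have "x t > 0" "y t > 0" "S > 0"
    using x_pos[OF t] y_pos[OF t] by (simp_all add: S_def)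
  have "(x has_real_derivative X) (at t within T)"
    using has_delta_derivative_imp_has_real_derivative[OF x_deriv[OF t]] assms(2)
    by (simp add: X_def S_def)
  moreover have "(y has_real_derivative Y) (at t within T)"
    using has_delta_derivative_imp_has_real_derivative[OF y_deriv[OF t]] assms(2)
    by (simp add: Y_def S_def)
  moreover have "X / x t - (X + Y) * k / S = (k * c t - b t) * y t / S"
    using \<open>x t > 0\<close> \<open>S > 0\<close> by (simp add: X_def Y_def field_simps)
  ultimately show ?thesis
    unfolding lyapunov_def S_def[symmetric] using \<open>x t > 0\<close> \<open>y t > 0\<close> \<open>S > 0\<close>
    by (auto intro!: derivative_eq_intros simp: S_def)
qed

lemma lyapunov_mono:
  assumes "s \<in> T" "r \<in> T" "s \<le> r"
  shows "lyapunov s \<le> lyapunov r"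
  using closed assms
proof (rule ts_mono_criterion)
  show "(lyapunov \<longlongrightarrow> lyapunov t) (at t within T)" if "t \<in> T" for t
    unfolding lyapunov_def
    using has_delta_derivative_imp_tendsto[OF x_deriv[OF that] that]
      has_delta_derivative_imp_tendsto[OF y_deriv[OF that] that] x_pos[OF that] y_pos[OF that]
    by (auto intro!: tendsto_intros)
  show "lyapunov t \<le> lyapunov (ts_sigma T t)" if "t \<in> T" "t < ts_sigma T t" for t
    using that by (rule lyapunov_jump)
  show "\<exists>D\<ge>0. (lyapunov has_real_derivative D) (at t within T)" if "t \<in> T" "ts_sigma T t = t" for t
    using lyapunov_deriv[OF that] b_le_kc[OF that(1)] x_pos[OF that(1)] y_pos[OF that(1)]
    by (intro exI[of _ "(k * c t - b t) * y t / (x t + y t)"]) simp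
qed

lemma x_lower_bound:
  assumes "k < 1" "s \<in> T" "r \<in> T" "s \<le> r"
  shows "exp (lyapunov s / (1 - k)) \<le> x r"
proof -
  have "0 < x r" "0 < y r"
    using x_pos[OF assms(3)] y_pos[OF assms(3)] by simp_all
  then have "k * ln (x r) \<le> k * ln (x r + y r)"
    using k by (intro mult_left_mono) simp_all
  then have "lyapunov r \<le> ln (x r) * (1 - k)"
    by (simp add: lyapunov_def algebra_simps)
  with lyapunov_mono[OF assms(2-4)] have "lyapunov s \<le> ln (x r) * (1 - k)"
    by linarith
  with assms(1) have "lyapunov s / (1 - k) \<le> ln (x r)"
    by (simp add: pos_divide_le_eq)
  then have "exp (lyapunov s / (1 - k)) \<le> exp (ln (x r))"
    by simp
  with \<open>0 < x r\<close> show ?thesis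
    by simp
qed

lemma x_uniformly_pos:
  assumes "k < 1" "t0 \<in> T"
  obtains \<epsilon> where "\<epsilon> > 0" "\<And>t. t \<in> T \<Longrightarrow> \<epsilon> \<le> x t"
proof
  show "exp (lyapunov t0 / (1 - k)) > 0"
    by simp
  show "exp (lyapunov t0 / (1 - k)) \<le> x t" if "t \<in> T" for t
  proof (cases "t0 \<le> t")
    case True
    with assms that show ?thesis
      by (rule x_lower_bound)
  next
    case False
    then have "x t0 \<le> x t"
      using x_antimono[OF that assms(2)] by simp
    with x_lower_bound[OF assms(1,2,2) order_refl] show ?thesis
      by linarith
  qed
qed

end

theorem sir_limits:
  assumes unbounded: "\<forall>r. \<exists>t\<in>T. r < t" and t0: "t0 \<in> T"
    and k: "0 \<le> k" "k < 1" "\<And>t. t \<in> T \<Longrightarrow> b t \<le> k * c t"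
    and P: "\<And>t. t \<in> T \<Longrightarrow> has_delta_derivative T P (c t - b t) t"
    and P_lim: "filterlim P at_top (inf at_top (principal T))"
  obtains \<alpha> where "0 < \<alpha>" "\<alpha> \<le> x t0"
    and "(x \<longlongrightarrow> \<alpha>) (inf at_top (principal T))"
    and "(y \<longlongrightarrow> 0) (inf at_top (principal T))"
    and "(z \<longlongrightarrow> x t0 + y t0 + z t0 - \<alpha>) (inf at_top (principal T))"
proof
  let ?F = "inf at_top (principal T)"
  have "T \<noteq> {}"
    using t0 by blast
  have bdd: "bdd_below (x ` T)"
    using x_pos by (intro bdd_belowI2[of _ 0]) (simp add: less_imp_le)
  show x_lim: "(x \<longlongrightarrow> Inf (x ` T)) ?F"
    using \<open>T \<noteq> {}\<close> bdd x_antimono by (rule ts_antimono_tendsto_Inf)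
  show y_lim: "(y \<longlongrightarrow> 0) ?F"
    using closed unbounded
  proof (rule ts_tendsto_zero_if_delta_derivative_le)
    show "incidence t - c t * y (ts_sigma T t) \<le> - (c t - b t) * y (ts_sigma T t)" if "t \<in> T" for t
      using incidence_le[OF that] by (simp add: algebra_simps)
  qed (use y_pos b_le_c y_deriv_incidence P P_lim in \<open>auto simp: less_imp_le\<close>)
  obtain \<epsilon> where "\<epsilon> > 0" "\<And>t. t \<in> T \<Longrightarrow> \<epsilon> \<le> x t"
    using x_uniformly_pos[OF k(1) less_imp_le[OF k(2)] k(3) k(2) t0] by blast
  then show "0 < Inf (x ` T)"
    using \<open>T \<noteq> {}\<close> by (auto intro: less_le_trans[OF _ cInf_greatest])
  show "Inf (x ` T) \<le> x t0"
    using bdd t0 by (simp add: cInf_lower)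
  have "\<forall>\<^sub>F t in ?F. x t0 + y t0 + z t0 - x t - y t = z t"
    using population_const[OF t0] by (intro eventually_ts_at_top[of T t0]) (simp add: algebra_simps)
  moreover have "((\<lambda>t. x t0 + y t0 + z t0 - x t - y t) \<longlongrightarrow> x t0 + y t0 + z t0 - Inf (x ` T) - 0) ?F"
    by (intro tendsto_intros x_lim y_lim)
  ultimately show "(z \<longlongrightarrow> x t0 + y t0 + z t0 - Inf (x ` T)) ?F"
    by (simp add: tendsto_cong)
qed

end

theorem theorem26:
  fixes T :: "real set" and t0 x0 y0 z0 N M :: real
    and b c x y z :: "real \<Rightarrow> real"
  assumes TS: "time_scale T"
    and unbdd: "\<forall>r. \<exists>t\<in>T. t > r"
    and t0: "t0 \<in> T"
    and b_nn: "\<forall>t\<in>T. b t \<ge> 0"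
    and c_nn: "\<forall>t\<in>T. c t \<ge> 0"
    and reg: "pos_regressive T (\<lambda>t. c t - b t)"
    and x0: "x0 > 0" and y0: "y0 > 0" and z0: "z0 \<ge> 0"
    and N: "N = x0 + y0 + z0"
    and M: "M > 0" "\<forall>t\<in>T. b t \<le> M * (c t - b t)"
    and int_inf: "delta_integral_diverges T (\<lambda>t. c t - b t) t0"
    and x_pos: "\<forall>t\<in>T. x t > 0"
    and y_pos: "\<forall>t\<in>T. y t > 0"
    and z_nn: "\<forall>t\<in>T. z t \<ge> 0"
    and init: "x t0 = x0" "y t0 = y0" "z t0 = z0"
    and eq_x: "\<forall>t\<in>T. has_delta_derivative T x
                 (- (b t * x t * y (ts_sigma T t) / (x t + y t))) t"
    and eq_y: "\<forall>t\<in>T. has_delta_derivative T y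
                 (b t * x t * y (ts_sigma T t) / (x t + y t) - c t * y (ts_sigma T t)) t"
    and eq_z: "\<forall>t\<in>T. has_delta_derivative T z (c t * y (ts_sigma T t)) t"
  shows "\<exists>\<alpha>. 0 < \<alpha> \<and> \<alpha> < N \<and>
           (x \<longlongrightarrow> \<alpha>) (inf at_top (principal T)) \<and>
           (y \<longlongrightarrow> 0) (inf at_top (principal T)) \<and>
           (z \<longlongrightarrow> N - \<alpha>) (inf at_top (principal T))"
proof -
  define k where "k = M / (1 + M)"
  have k: "0 \<le> k" "k < 1"
    using M(1) by (simp_all add: k_def)
  have b_le_kc: "b t \<le> k * c t" if "t \<in> T" for t
    using M that by (auto simp: k_def field_simps)
  have b_le_c: "b t \<le> c t" if "t \<in> T" for t
    using b_le_kc[OF that] mult_left_le_one_le[of "c t" k] c_nn that k by auto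
  interpret sir_solution T b c x y z
    using TS b_nn b_le_c x_pos y_pos eq_x eq_y eq_z by unfold_locales (auto simp: time_scale_def)
  obtain P where "\<And>t. t \<in> T \<Longrightarrow> has_delta_derivative T P (c t - b t) t"
    and "filterlim P at_top (inf at_top (principal T))"
    using delta_integral_diverges_antiderivative[OF TS unbdd _ int_inf] reg
    by (auto simp: pos_regressive_def)
  with sir_limits[OF unbdd t0 k b_le_kc] obtain \<alpha> where "0 < \<alpha>" "\<alpha> \<le> x t0"
    and "(x \<longlongrightarrow> \<alpha>) (inf at_top (principal T))" "(y \<longlongrightarrow> 0) (inf at_top (principal T))"
    and "(z \<longlongrightarrow> x t0 + y t0 + z t0 - \<alpha>) (inf at_top (principal T))"
    by blast
  with init x0 y0 z0 N show ?thesis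
    by auto
qed

end
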